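(* Let $p$ be a prime and let $\lambda=(\lambda_1, \lambda_2, \ldots, \lambda_s)$ be a partition of $d$ with distinct parts $\lambda_1>\lambda_2>\cdots>\lambda_s>0$. Define $$\hat{\lambda}=(\lambda_1^{p-1}, \lambda_2^{p-1}, \ldots, \lambda_s^{p-1}) \vdash (p-1)d,$$ the partition in which each $\lambda_i$ appears exactly $p-1$ times. Then $m(\hat{\lambda})=(p-1)\lambda$, where $m$ is the Mullineux map.
   Context: For a partition $\nu$ and a positive integer $c$, $c\nu$ multiplies every part by $c$. A partition is $p$-regular if no part occurs $p$ or more times. For a $p$-regular partition $\nu$ of $n$, let $D^\nu$ be the simple module over $k\Sigma_n$ ($k$ algebraically closed of characteristic $p$) that is the head of the Specht module $S^\nu$. The Mullineux map $m$ is the bijection on $p$-regular partitions of $n$ defined by $D^\nu \otimes \operatorname{sgn} \cong D^{m(\nu)}$, where $\operatorname{sgn}$ is the sign representation (equivalently, the combinatorial Mullineux bijection). *)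

theory Defs
  imports "HOL-Computational_Algebra.Primes"
begin

text \<open>Row i (0-indexed) has length l!i.  Combinatorial Mullineux map via p-rims
  and Mullineux symbols (Mullineux 1979; Bessenrodt--Olsson).\<close>

definition is_partition :: "nat list \<Rightarrow> bool" where
  "is_partition l \<longleftrightarrow> sorted_wrt (\<ge>) l \<and> (\<forall>x\<in>set l. 0 < x)"

definition p_regular :: "nat \<Rightarrow> nat list \<Rightarrow> bool" where
  "p_regular p l \<longleftrightarrow> (\<forall>x\<in>set l. count_list l x < p)"

text \<open>Number of p-rim nodes in each row.  The rim of row i consists of
  l!i - l!(i+1) + 1 nodes (all l!i nodes for the last row); the p-rim is cut
  into p-segments, each taking p consecutive rim nodes (walking from the top
  right), the next segment starting at the rightmost node of the row below the
  row where the previous segment ended.  k = nodes still to take in the current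
  segment.\<close>
fun prim :: "nat \<Rightarrow> nat \<Rightarrow> nat list \<Rightarrow> nat list" where
  "prim p k [] = []"
| "prim p k (x # xs) =
     (let c = (case xs of [] \<Rightarrow> x | y # _ \<Rightarrow> if 0 < y then x - y + 1 else x)
      in if c < k then c # prim p (k - c) xs else k # prim p p xs)"

definition remove_prim :: "nat \<Rightarrow> nat list \<Rightarrow> nat list" where
  "remove_prim p l = filter (\<lambda>x. 0 < x) (map2 (-) l (prim p p l))"

primrec msym_aux :: "nat \<Rightarrow> nat \<Rightarrow> nat list \<Rightarrow> (nat \<times> nat) list" where
  "msym_aux p 0 l = []"
| "msym_aux p (Suc n) l =
     (if l = [] then []
      else (sum_list (prim p p l), length l) # msym_aux p n (remove_prim p l))"

text \<open>Mullineux symbol: list of columns (a_i, r_i), a_i = size of the i-th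
  p-rim, r_i = number of rows of the i-th partition in the sequence.\<close>
definition mullineux_symbol :: "nat \<Rightarrow> nat list \<Rightarrow> (nat \<times> nat) list" where
  "mullineux_symbol p l = msym_aux p (sum_list l) l"

definition mullineux :: "nat \<Rightarrow> nat list \<Rightarrow> nat list" where
  "mullineux p l = (THE mu. is_partition mu \<and> p_regular p mu \<and>
      sum_list mu = sum_list l \<and>
      mullineux_symbol p mu =
        map (\<lambda>(a, r). (a, a + (if p dvd a then 0 else 1) - r)) (mullineux_symbol p l))"

end

theory Submission
  imports Defs
begin

text \<open>Put x = (p-1)\<lambda>. Splitting each part v = (p-1)q + r of x into the p-1 nearly equal
  parts (q+1)^r q^(p-1-r) turns x into \<lambda>-hat. Since the parts of x differ by at least p-1,
  the p-rim of x takes p nodes from every row except the last, so removing it lowers each part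
  by p. On the split side the p-rim takes exactly p nodes from each block of p-1 rows coming from
  a part of x (fewer only for a short last part), and removing it leaves the split of the lowered
  x. Thus the two sequences of rim removals run in parallel: the rims have equal sizes a, and the
  row numbers add up to a + \<epsilon>, which is the transformation of Mullineux symbols defining m.
  Finally x is the only partition with its own symbol: a partition whose rim data agree with
  those of x is pointwise at most x and has the same size.\<close>

lemma length_prim [simp]: "length (prim p k l) = length l"
  by (induction p k l rule: prim.induct) (auto simp: Let_def split: list.splits)

lemma prim_Cons_Cons:
  "0 < b \<Longrightarrow> prim p k (a # b # ys) =
     (if a - b + 1 < k then (a - b + 1) # prim p (k - (a - b + 1)) (b # ys)
      else k # prim p p (b # ys))"
  by (simp add: Let_def)

lemma prim_singleton: "prim p k [a] = (if a < k then [a] else [k])"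
  by simp

declare prim.simps(2) [simp del] prim_singleton [simp]

lemma prim_replicate_append:
  assumes "n < k" "0 < a"
  shows "prim p k (replicate n a @ a # ys) = replicate n 1 @ prim p (k - n) (a # ys)"
  using assms
proof (induction n arbitrary: k)
  case (Suc n)
  have "prim p k (replicate (Suc n) a @ a # ys) = 1 # prim p (k - 1) (replicate n a @ a # ys)"
    using Suc.prems by (cases n) (auto simp: prim_Cons_Cons)
  then show ?case
    using Suc by (simp add: diff_diff_add)
qed simp

lemma prim_le_parts: "\<forall>v\<in>set l. 0 < v \<Longrightarrow> list_all2 (\<ge>) l (prim p k l)"
proof (induction l arbitrary: k rule: induct_list012)
  case (3 x y zs)
  then show ?case
    by (cases "x - y + 1 < k") (auto simp: prim_Cons_Cons)
qed simp_all

lemma prim_le: "k \<le> p \<Longrightarrow> \<forall>v\<in>set l. 0 < v \<Longrightarrow> \<forall>t\<in>set (prim p k l). t \<le> p"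
proof (induction l arbitrary: k rule: induct_list012)
  case (3 x y zs)
  have pos: "\<forall>v\<in>set (y # zs). 0 < v"
    using "3.prems" by simp
  show ?case
  proof (cases "x - y + 1 < k")
    case True
    then show ?thesis
      using "3.prems" "3.IH"(2)[OF _ pos, of "k - (x - y + 1)"] by (auto simp: prim_Cons_Cons)
  next
    case False
    then show ?thesis
      using "3.prems" "3.IH"(2)[OF _ pos, of p] by (auto simp: prim_Cons_Cons)
  qed
qed simp_all

lemma prim_pos: "0 < k \<Longrightarrow> 0 < p \<Longrightarrow> \<forall>v\<in>set l. 0 < v \<Longrightarrow> \<forall>t\<in>set (prim p k l). 0 < t"
proof (induction l arbitrary: k rule: induct_list012)
  case (3 x y zs)
  have pos: "\<forall>v\<in>set (y # zs). 0 < v"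
    using "3.prems" by simp
  show ?case
  proof (cases "x - y + 1 < k")
    case True
    have "\<forall>t\<in>set (prim p (k - (x - y + 1)) (y # zs)). 0 < t"
      using True by (intro "3.IH"(2)[OF _ "3.prems"(2) pos]) simp
    then show ?thesis
      using "3.prems" True by (simp add: prim_Cons_Cons)
  next
    case False
    have "\<forall>t\<in>set (prim p p (y # zs)). 0 < t"
      using "3.IH"(2)[OF "3.prems"(2) "3.prems"(2) pos] by simp
    then show ?thesis
      using "3.prems" False by (simp add: prim_Cons_Cons)
  qed
qed simp_all

lemma sum_list_map2_minus:
  "list_all2 (\<ge>) xs ys \<Longrightarrow> sum_list (map2 (-) xs ys) + sum_list ys = sum_list (xs :: nat list)"
  by (induction rule: list_all2_induct) auto

lemma sorted_map2_minus_prim_Cons: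
  assumes sorted: "sorted_wrt (\<ge>) (map2 (-) (y # ys) (prim p k (y # ys)))"
    and pos: "\<forall>v\<in>set (y # ys). 0 < v" "0 < k" "0 < p"
    and "t \<le> x - y + 1" "y \<le> x"
  shows "sorted_wrt (\<ge>) (map2 (-) (x # y # ys) (t # prim p k (y # ys)))"
proof -
  obtain t' ts where t': "prim p k (y # ys) = t' # ts"
    by (metis length_prim length_Suc_conv)
  have "0 < t'"
    using prim_pos[OF pos(2,3,1)] t' by auto
  then have head: "y - t' \<le> x - t"
    using assms by simp
  let ?L = "map2 (-) (y # ys) (t' # ts)"
  have "sorted_wrt (\<ge>) ?L"
    using sorted t' by simp
  moreover have "\<forall>b\<in>set ?L. b \<le> x - t"
  proof
    fix b assume "b \<in> set ?L"
    then have "b = y - t' \<or> b \<in> set (map2 (-) ys ts)" by auto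
    then show "b \<le> x - t" using \<open>sorted_wrt (\<ge>) ?L\<close> head by auto
  qed
  ultimately show ?thesis
    using t' by simp
qed

lemma sorted_map2_minus_prim:
  assumes "sorted_wrt (\<ge>) l" "\<forall>v\<in>set l. 0 < v" "0 < k" "0 < p"
  shows "sorted_wrt (\<ge>) (map2 (-) l (prim p k l))"
  using assms
proof (induction l arbitrary: k rule: induct_list012)
  case (3 x y zs)
  have sorted: "sorted_wrt (\<ge>) (y # zs)" and pos: "\<forall>v\<in>set (y # zs). 0 < v" and "y \<le> x"
    using "3.prems" by auto
  show ?case
  proof (cases "x - y + 1 < k")
    case True
    then have "prim p k (x # y # zs) = (x - y + 1) # prim p (k - (x - y + 1)) (y # zs)"
      using pos by (simp add: prim_Cons_Cons)
    then show ?thesis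
      by (metis sorted_map2_minus_prim_Cons "3.IH"(2) sorted pos "3.prems"(4) \<open>y \<le> x\<close>
          True zero_less_diff order_refl)
  next
    case False
    then have "prim p k (x # y # zs) = k # prim p p (y # zs)"
      using pos by (simp add: prim_Cons_Cons)
    then show ?thesis
      by (metis sorted_map2_minus_prim_Cons "3.IH"(2) sorted pos "3.prems"(4) \<open>y \<le> x\<close>
          False "3.prems"(3) not_less)
  qed
qed simp_all

text \<open>Cutting the rim of l into segments of p nodes, the first one of k nodes: besides the
  first segment there are C segments, and the last one lacks d nodes.\<close>
lemma prim_segments:
  assumes "l \<noteq> []" "\<forall>v\<in>set l. 0 < v" "0 < k" "k \<le> p"
  shows "\<exists>C d. sum_list (prim p k l) + d = p * C + k \<and> C < length l \<and>
    last (prim p k l) + d \<le> p \<and> d < p"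
  using assms
proof (induction l arbitrary: k rule: induct_list012)
  case (2 x)
  show ?case
  proof (cases "x < k")
    case True
    then show ?thesis
      using "2.prems" by (intro exI[of _ 0] exI[of _ "k - x"]) auto
  next
    case False
    then show ?thesis
      using "2.prems" by (intro exI[of _ 0] exI[of _ 0]) auto
  qed
next
  case (3 x y zs)
  have pos: "\<forall>v\<in>set (y # zs). 0 < v"
    using "3.prems" by simp
  have ne: "prim p k' (y # zs) \<noteq> []" for k'
    by (metis length_prim list.distinct(1) length_0_conv)
  show ?case
  proof (cases "x - y + 1 < k")
    case True
    then have e: "prim p k (x # y # zs) = (x - y + 1) # prim p (k - (x - y + 1)) (y # zs)"
      using pos by (simp add: prim_Cons_Cons)
    obtain C d where "sum_list (prim p (k - (x - y + 1)) (y # zs)) + d = p * C + (k - (x - y + 1))"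
        "C < length (y # zs)" "last (prim p (k - (x - y + 1)) (y # zs)) + d \<le> p" "d < p"
      using "3.IH"(2)[of "k - (x - y + 1)"] pos True "3.prems"(4) by fastforce
    then have "sum_list (prim p k (x # y # zs)) + d = p * C + k \<and> C < length (x # y # zs) \<and>
        last (prim p k (x # y # zs)) + d \<le> p \<and> d < p"
      using e True ne by (simp; linarith)
    then show ?thesis
      by blast
  next
    case False
    then have e: "prim p k (x # y # zs) = k # prim p p (y # zs)"
      using pos by (simp add: prim_Cons_Cons)
    obtain C d where "sum_list (prim p p (y # zs)) + d = p * C + p"
        "C < length (y # zs)" "last (prim p p (y # zs)) + d \<le> p" "d < p"
      using "3.IH"(2)[of p] pos "3.prems"(3,4) by fastforce
    then have "sum_list (prim p k (x # y # zs)) + d = p * Suc C + k \<and> Suc C < length (x # y # zs) \<and>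
        last (prim p k (x # y # zs)) + d \<le> p \<and> d < p"
      using e ne by simp
    then show ?thesis
      by blast
  qed
qed simp

lemma sum_list_filter_pos: "sum_list (filter (\<lambda>y. 0 < y) xs) = sum_list (xs :: nat list)"
  by (induction xs) auto

lemma is_partition_remove_prim:
  assumes "is_partition l" "0 < p"
  shows "is_partition (remove_prim p l)"
proof -
  have "sorted_wrt (\<ge>) (map2 (-) l (prim p p l))"
    using assms sorted_map2_minus_prim by (simp add: is_partition_def)
  then show ?thesis
    unfolding is_partition_def remove_prim_def by (auto intro: sorted_wrt_filter)
qed

lemma sum_list_remove_prim:
  "\<forall>v\<in>set l. 0 < v \<Longrightarrow> sum_list (remove_prim p l) + sum_list (prim p p l) = sum_list l"
  unfolding remove_prim_def sum_list_filter_pos by (rule sum_list_map2_minus[OF prim_le_parts])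

definition p_spaced :: "nat \<Rightarrow> nat list \<Rightarrow> bool" where
  "p_spaced p x \<longleftrightarrow> sorted_wrt (\<lambda>a b. b + (p - 1) \<le> a) x \<and> (\<forall>v\<in>set x. 0 < v)"

definition lower_parts :: "nat \<Rightarrow> nat list \<Rightarrow> nat list" where
  "lower_parts p x = filter (\<lambda>v. 0 < v) (map (\<lambda>v. v - p) x)"

lemma p_spaced_Cons:
  "p_spaced p (v # xs) \<longleftrightarrow> 0 < v \<and> (\<forall>w\<in>set xs. w + (p - 1) \<le> v) \<and> p_spaced p xs"
  by (auto simp: p_spaced_def)

lemma p_spaced_Cons_Cons_ge: "p_spaced p (v # w # ys) \<Longrightarrow> p \<le> v"
  by (auto simp: p_spaced_Cons)

lemma prim_p_spaced_Cons: "p_spaced p (v # xs) \<Longrightarrow> p \<le> v \<Longrightarrow> prim p p (v # xs) = p # prim p p xs"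
  by (cases xs) (auto simp: p_spaced_Cons prim_Cons_Cons)

lemma map2_minus_prim_p_spaced: "p_spaced p x \<Longrightarrow> map2 (-) x (prim p p x) = map (\<lambda>v. v - p) x"
proof (induction x rule: induct_list012)
  case (3 v w ys)
  have "prim p p (v # w # ys) = p # prim p p (w # ys)"
    using "3.prems" prim_p_spaced_Cons p_spaced_Cons_Cons_ge by blast
  then show ?case
    using 3 by (simp add: p_spaced_Cons)
qed simp_all

lemma remove_prim_p_spaced: "p_spaced p x \<Longrightarrow> remove_prim p x = lower_parts p x"
  by (simp add: remove_prim_def lower_parts_def map2_minus_prim_p_spaced)

lemma sum_list_prim_p_spaced:
  "p_spaced p x \<Longrightarrow> x \<noteq> [] \<Longrightarrow> sum_list (prim p p x) = p * (length x - 1) + min p (last x)"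
proof (induction x rule: induct_list012)
  case (3 v w ys)
  have "prim p p (v # w # ys) = p # prim p p (w # ys)"
    using "3.prems" prim_p_spaced_Cons p_spaced_Cons_Cons_ge by blast
  then show ?case
    using 3 by (simp add: p_spaced_Cons algebra_simps)
qed simp_all

lemma lower_parts_eq: "lower_parts p x = map (\<lambda>v. v - p) (filter (\<lambda>v. p < v) x)"
  by (induction x) (auto simp: lower_parts_def)

lemma p_spaced_lower_parts: "p_spaced p x \<Longrightarrow> p_spaced p (lower_parts p x)"
proof -
  assume "p_spaced p x"
  then have "sorted_wrt (\<lambda>a b. b + (p - 1) \<le> a) (filter (\<lambda>v. p < v) x)"
    by (auto simp: p_spaced_def sorted_wrt_filter)
  then have "sorted_wrt (\<lambda>a b. (b - p) + (p - 1) \<le> a - p) (filter (\<lambda>v. p < v) x)"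
    by (rule sorted_wrt_mono_rel[rotated]) auto
  then show ?thesis
    by (auto simp: lower_parts_eq p_spaced_def sorted_wrt_map)
qed

definition balanced_block :: "nat \<Rightarrow> nat \<Rightarrow> nat \<Rightarrow> nat list" where
  "balanced_block p q r = replicate r (Suc q) @ replicate (p - 1 - r) q"

definition split_part :: "nat \<Rightarrow> nat \<Rightarrow> nat list" where
  "split_part p v = balanced_block p (v div (p - 1)) (v mod (p - 1))"

definition split_parts :: "nat \<Rightarrow> nat list \<Rightarrow> nat list" where
  "split_parts p x = filter (\<lambda>v. 0 < v) (concat (map (split_part p) x))"

text \<open>The p-rim of a balanced block: one node in each row, two in row r (the last row if r = 0).\<close>
definition block_rim :: "nat \<Rightarrow> nat \<Rightarrow> nat list" where
  "block_rim p r = (if r = 0 then replicate (p - 2) 1 @ [2]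
     else replicate (r - 1) 1 @ 2 # replicate (p - 2 - r) 1 @ [1])"

lemma split_part_eq: "r < p - 1 \<Longrightarrow> split_part p ((p - 1) * q + r) = balanced_block p q r"
  by (simp add: split_part_def)

lemma split_parts_Nil [simp]: "split_parts p [] = []"
  by (simp add: split_parts_def)

lemma split_parts_Cons: "split_parts p (v # x) = filter (\<lambda>v. 0 < v) (split_part p v) @ split_parts p x"
  by (simp add: split_parts_def)

lemma length_balanced_block [simp]: "r < p - 1 \<Longrightarrow> length (balanced_block p q r) = p - 1"
  by (simp add: balanced_block_def)

lemma sum_list_balanced_block: "r < p - 1 \<Longrightarrow> sum_list (balanced_block p q r) = (p - 1) * q + r"
proof -
  assume r: "r < p - 1"
  have "sum_list (balanced_block p q r) = r * Suc q + (p - 1 - r) * q"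
    by (simp add: balanced_block_def sum_list_replicate)
  also have "\<dots> = (r + (p - 1 - r)) * q + r"
    by (simp add: algebra_simps)
  also have "r + (p - 1 - r) = p - 1"
    using r by simp
  finally show ?thesis .
qed

lemma sum_list_split_part: "2 \<le> p \<Longrightarrow> sum_list (split_part p v) = v"
  unfolding split_part_def by (subst sum_list_balanced_block) auto

lemma filter_pos_balanced_block: "0 < q \<Longrightarrow> filter (\<lambda>v. 0 < v) (balanced_block p q r) = balanced_block p q r"
  by (auto simp: balanced_block_def)

lemma length_block_rim: "2 \<le> p \<Longrightarrow> r < p - 1 \<Longrightarrow> length (block_rim p r) = p - 1"
  by (auto simp: block_rim_def)

lemma sum_list_block_rim: "2 \<le> p \<Longrightarrow> r < p - 1 \<Longrightarrow> sum_list (block_rim p r) = p"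
  by (auto simp: block_rim_def sum_list_replicate)

lemma balanced_block_zero: "2 \<le> p \<Longrightarrow> balanced_block p q 0 = replicate (p - 2) q @ [q]"
proof -
  assume "2 \<le> p"
  then obtain m where "p = Suc (Suc m)"
    using add_2_eq_Suc le_Suc_ex by blast
  then show ?thesis
    by (simp add: balanced_block_def replicate_append_same)
qed

lemma balanced_block_pos:
  "0 < r \<Longrightarrow> r < p - 1 \<Longrightarrow>
    balanced_block p q r = replicate (r - 1) (Suc q) @ Suc q # replicate (p - 2 - r) q @ [q]"
  by (cases r) (auto simp: balanced_block_def replicate_append_same Suc_diff_Suc numeral_2_eq_2
      simp flip: replicate_Suc)

lemma prim_balanced_block_append:
  assumes p: "2 \<le> p" and q: "0 < q" and r: "r < p - 1"
  shows "prim p p (balanced_block p q r @ ys) =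
    (if r = 0 then replicate (p - 2) 1 @ prim p 2 (q # ys)
     else replicate (r - 1) 1 @ 2 # replicate (p - 2 - r) 1 @ prim p 1 (q # ys))"
proof (cases "r = 0")
  case True
  have "prim p p (balanced_block p q r @ ys) = prim p p (replicate (p - 2) q @ q # ys)"
    using True p by (simp add: balanced_block_zero)
  also have "\<dots> = replicate (p - 2) 1 @ prim p 2 (q # ys)"
    using prim_replicate_append[of "p - 2" p q] p q by simp
  finally show ?thesis
    using True by simp
next
  case False
  define n where "n = p - 2 - r"
  have "prim p p (balanced_block p q r @ ys) =
      prim p p (replicate (r - 1) (Suc q) @ Suc q # q # replicate n q @ ys)"
    using False r by (simp add: balanced_block_pos n_def replicate_app_Cons_same)
  also have "\<dots> = replicate (r - 1) 1 @ prim p (p - (r - 1)) (Suc q # q # replicate n q @ ys)"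
    using prim_replicate_append[of "r - 1" p "Suc q"] r by simp
  also have "prim p (p - (r - 1)) (Suc q # q # replicate n q @ ys) =
      2 # prim p (p - (r - 1) - 2) (replicate n q @ q # ys)"
    using q r False by (simp add: prim_Cons_Cons replicate_app_Cons_same)
  also have "prim p (p - (r - 1) - 2) (replicate n q @ q # ys) = replicate n 1 @ prim p 1 (q # ys)"
    using prim_replicate_append[of n "p - (r - 1) - 2" q] q r False by (simp add: n_def)
  finally show ?thesis
    using False by (simp add: n_def)
qed

lemma prim_balanced_block:
  assumes "2 \<le> p" "0 < q" "r < p - 1" "r = 0 \<Longrightarrow> 2 \<le> q"
  shows "prim p p (balanced_block p q r) = block_rim p r"
  using prim_balanced_block_append[OF assms(1-3), of "[]"] assms(2,4) by (cases "r = 0") (auto simp: block_rim_def)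

lemma prim_balanced_block_Cons:
  assumes "2 \<le> p" "0 < q" "r < p - 1" "0 < h" "r = 0 \<Longrightarrow> h + 1 \<le> q" "0 < r \<Longrightarrow> h \<le> q"
  shows "prim p p (balanced_block p q r @ h # ys) = block_rim p r @ prim p p (h # ys)"
  using prim_balanced_block_append[OF assms(1-3), of "h # ys"] assms(4-6)
  by (cases "r = 0") (auto simp: block_rim_def prim_Cons_Cons)

lemma balanced_block_minus_rim:
  assumes p: "2 \<le> p" and q: "0 < q" and r: "r < p - 1" and q2: "r = 0 \<Longrightarrow> 2 \<le> q"
  shows "map2 (-) (balanced_block p q r) (block_rim p r) = split_part p ((p - 1) * q + r - p)"
proof (cases "r = 0")
  case True
  obtain m q' where m: "p = Suc (Suc m)" and q': "q = Suc (Suc q')"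
    using p q2[OF True] by (metis add_2_eq_Suc le_Suc_ex)
  have "map2 (-) (balanced_block p q r) (block_rim p r) = replicate (p - 2) (q - 1) @ [q - 2]"
    using True p by (simp add: balanced_block_zero block_rim_def zip_append)
  also have "\<dots> = balanced_block p (q - 2) (p - 2)"
    by (simp add: balanced_block_def m q' replicate_append_same)
  also have "\<dots> = split_part p ((p - 1) * (q - 2) + (p - 2))"
    using split_part_eq[of "p - 2" p "q - 2"] p by simp
  also have "(p - 1) * (q - 2) + (p - 2) = (p - 1) * q + r - p"
    using True by (simp add: m q' algebra_simps)
  finally show ?thesis .
next
  case False
  have "map2 (-) (balanced_block p q r) (block_rim p r) =
      replicate (r - 1) q @ (q - 1) # replicate (p - 2 - r) (q - 1) @ [q - 1]"
    using False r by (simp add: balanced_block_pos block_rim_def zip_append)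
  also have "\<dots> = balanced_block p (q - 1) (r - 1)"
    using False r q by (simp add: balanced_block_def replicate_append_same Suc_diff_Suc flip: replicate_Suc)
  also have "\<dots> = split_part p ((p - 1) * (q - 1) + (r - 1))"
    using split_part_eq[of "r - 1" p "q - 1"] r by simp
  also have "(p - 1) * (q - 1) + (r - 1) = (p - 1) * q + r - p"
  proof -
    obtain q' where q': "q = Suc q'"
      using q gr0_implies_Suc by blast
    have "1 \<le> p"
      using r by linarith
    then have "q' \<le> p * q'"
      using mult_le_mono1[of 1 p q'] by simp
    then show ?thesis
      using q' False r by (simp add: algebra_simps)
  qed
  finally show ?thesis .
qed

lemma div_mod_ge_of_ge:
  fixes p v :: nat
  assumes "2 \<le> p" "p \<le> v"
  shows "0 < v div (p - 1)" and "v mod (p - 1) = 0 \<Longrightarrow> 2 \<le> v div (p - 1)"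
proof -
  have v: "v = (p - 1) * (v div (p - 1)) + v mod (p - 1)" and "v mod (p - 1) < p - 1"
    using assms(1) by simp_all
  then show "0 < v div (p - 1)"
    using assms(2) by (metis add_0 less_le_trans mult_0_right neq0_conv diff_le_self not_less)
  show "2 \<le> v div (p - 1)" if "v mod (p - 1) = 0"
  proof (rule ccontr)
    assume "\<not> 2 \<le> v div (p - 1)"
    then have "v div (p - 1) \<le> 1"
      by simp
    then have "v \<le> p - 1"
      using v that by (metis add_0_right mult_le_mono2 nat_mult_1_right)
    then show False
      using assms by linarith
  qed
qed

lemma hd_split_parts_Cons:
  assumes "2 \<le> p" "0 < w"
  shows "\<exists>rest. split_parts p (w # ys) =
    (w div (p - 1) + (if w mod (p - 1) = 0 then 0 else 1)) # rest"
proof -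
  define q where "q = w div (p - 1)"
  define r where "r = w mod (p - 1)"
  have r: "r < p - 1" and w: "w = (p - 1) * q + r"
    using assms by (simp_all add: q_def r_def)
  have sp: "split_part p w = balanced_block p q r"
    by (simp add: split_part_def q_def r_def)
  show ?thesis
  proof (cases "q = 0")
    case True
    then obtain r' where "r = Suc r'"
      using w assms(2) by (cases r) auto
    then show ?thesis
      using True sp unfolding q_def r_def by (simp add: split_parts_Cons balanced_block_def)
  next
    case False
    then have "filter (\<lambda>v. 0 < v) (split_part p w) = balanced_block p q r"
      using sp by (simp add: filter_pos_balanced_block)
    moreover obtain n where "p - 1 - r = Suc n"
      using r by (metis Suc_diff_Suc diff_Suc_1 less_imp_Suc_add)
    ultimately show ?thesis
      by (cases r) (simp_all add: split_parts_Cons balanced_block_def q_def r_def)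
  qed
qed

lemma div_mod_gap:
  fixes p q r q' r' :: nat
  assumes "(p - 1) * q' + r' + (p - 1) \<le> (p - 1) * q + r" "r < p - 1" "r' < p - 1"
  defines "h \<equiv> q' + (if r' = 0 then 0 else 1)"
  shows "r = 0 \<Longrightarrow> h + 1 \<le> q" and "0 < r \<Longrightarrow> h \<le> q"
proof -
  have q1: "q' + 1 \<le> q"
  proof (rule ccontr)
    assume "\<not> q' + 1 \<le> q"
    then have "(p - 1) * q \<le> (p - 1) * q'"
      by (simp add: mult_le_mono2)
    then show False
      using assms(1,2) by linarith
  qed
  have q2: "q' + 2 \<le> q" if "r = 0" "r' \<noteq> 0"
  proof (rule ccontr)
    assume "\<not> q' + 2 \<le> q"
    then have "q = q' + 1"
      using q1 by simp
    then have "(p - 1) * q = (p - 1) * q' + (p - 1)"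
      by (simp add: distrib_left)
    then show False
      using assms(1) that by linarith
  qed
  show "r = 0 \<Longrightarrow> h + 1 \<le> q" and "0 < r \<Longrightarrow> h \<le> q"
    using q1 q2 by (auto simp: h_def)
qed

lemma split_parts_Cons_ge:
  assumes p: "2 \<le> p" and sp: "p_spaced p (v # xs)" and v: "p \<le> v"
  defines "q \<equiv> v div (p - 1)" and "r \<equiv> v mod (p - 1)"
  shows "split_parts p (v # xs) = balanced_block p q r @ split_parts p xs"
    and "prim p p (split_parts p (v # xs)) = block_rim p r @ prim p p (split_parts p xs)"
    and "map2 (-) (balanced_block p q r) (block_rim p r) = split_part p (v - p)"
proof -
  have r: "r < p - 1" and vqr: "v = (p - 1) * q + r"
    using p by (simp_all add: q_def r_def)
  have q: "0 < q" and q2: "r = 0 \<Longrightarrow> 2 \<le> q"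
    using div_mod_ge_of_ge[OF p v] by (simp_all add: q_def r_def)
  show split: "split_parts p (v # xs) = balanced_block p q r @ split_parts p xs"
    using q by (simp add: split_parts_Cons split_part_def filter_pos_balanced_block q_def r_def)
  show "map2 (-) (balanced_block p q r) (block_rim p r) = split_part p (v - p)"
    using balanced_block_minus_rim[OF p q r q2] vqr by simp
  show "prim p p (split_parts p (v # xs)) = block_rim p r @ prim p p (split_parts p xs)"
  proof (cases xs)
    case Nil
    then show ?thesis
      using split prim_balanced_block[OF p q r q2] by simp
  next
    case (Cons w ys)
    have w: "0 < w" and gap: "w + (p - 1) \<le> v"
      using sp Cons by (simp_all add: p_spaced_Cons)
    define h where "h = w div (p - 1) + (if w mod (p - 1) = 0 then 0 else 1)"
    obtain rest where rest: "split_parts p xs = h # rest"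
      using hd_split_parts_Cons[OF p w, of ys] Cons unfolding h_def by auto
    have "0 < h"
      using w by (cases "w mod (p - 1) = 0") (auto simp: h_def dest: div_less)
    moreover have "r = 0 \<Longrightarrow> h + 1 \<le> q" and "0 < r \<Longrightarrow> h \<le> q"
      using div_mod_gap[of p "w div (p - 1)" "w mod (p - 1)" q r] gap vqr r p
      unfolding h_def by simp_all
    ultimately show ?thesis
      using split prim_balanced_block_Cons[OF p q r] rest by simp
  qed
qed

lemma split_parts_singleton_less: "0 < v \<Longrightarrow> v < p \<Longrightarrow> split_parts p [v] = replicate v 1"
  by (cases "v = p - 1") (simp_all add: split_parts_Cons split_part_def balanced_block_def)

lemma prim_replicate_one:
  assumes "v \<le> p"
  shows "prim p p (replicate v 1) = replicate v 1"
proof (cases v)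
  case (Suc u)
  have "prim p p (replicate u 1 @ [1]) = replicate u 1 @ prim p (p - u) [1]"
    using prim_replicate_append[of u p 1 p "[]"] Suc assms by simp
  moreover have "prim p (p - u) [1] = [1]"
    using Suc assms by (cases "1 < p - u") auto
  ultimately show ?thesis
    using Suc by (simp add: replicate_append_same)
qed simp

lemma split_parts_lower_parts_Cons:
  "split_parts p (lower_parts p (v # xs)) =
    filter (\<lambda>v. 0 < v) (split_part p (v - p)) @ split_parts p (lower_parts p xs)"
proof (cases "p < v")
  case False
  then have "filter (\<lambda>v. 0 < v) (split_part p (v - p)) = []"
    by (simp add: split_part_def balanced_block_def)
  then show ?thesis
    using False by (simp add: lower_parts_def)
qed (simp add: lower_parts_def split_parts_Cons)

lemma p_spaced_Cons_less:
  "p_spaced p (v # xs) \<Longrightarrow> v < p \<Longrightarrow> xs = []"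
  by (cases xs) (auto dest: p_spaced_Cons_Cons_ge)

lemma sum_list_prim_split_parts:
  assumes p: "2 \<le> p"
  shows "p_spaced p x \<Longrightarrow> sum_list (prim p p (split_parts p x)) = sum_list (prim p p x)"
proof (induction x)
  case (Cons v xs)
  show ?case
  proof (cases "p \<le> v")
    case True
    have "v mod (p - 1) < p - 1"
      using p by simp
    then show ?thesis
      using Cons split_parts_Cons_ge(2)[OF p Cons.prems True] prim_p_spaced_Cons[OF Cons.prems True]
      by (simp add: sum_list_block_rim[OF p] p_spaced_Cons)
  next
    case False
    then have "xs = []" and "0 < v"
      using Cons.prems p_spaced_Cons_less by (auto simp: p_spaced_Cons)
    then show ?thesis
      using False prim_replicate_one[of v p] by (simp add: split_parts_singleton_less sum_list_replicate)
  qed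
qed simp

lemma length_split_parts:
  assumes p: "2 \<le> p"
  shows "p_spaced p x \<Longrightarrow> length (split_parts p x) + length x =
    sum_list (prim p p x) + (if p dvd sum_list (prim p p x) then 0 else 1)"
proof (induction x)
  case (Cons v xs)
  show ?case
  proof (cases "p \<le> v")
    case True
    have "v mod (p - 1) < p - 1"
      using p by simp
    then have "length (split_parts p (v # xs)) = p - 1 + length (split_parts p xs)"
      using split_parts_Cons_ge(1)[OF p Cons.prems True] by simp
    moreover have "p dvd p + s \<longleftrightarrow> p dvd s" for s
      by simp
    ultimately show ?thesis
      using Cons p prim_p_spaced_Cons[OF Cons.prems True] by (simp add: p_spaced_Cons)
  next
    case False
    then have "xs = []" and "0 < v"
      using Cons.prems p_spaced_Cons_less by (auto simp: p_spaced_Cons)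
    moreover have "\<not> p dvd v"
      using False \<open>0 < v\<close> by (auto dest: dvd_imp_le)
    ultimately show ?thesis
      using False by (simp add: split_parts_singleton_less)
  qed
qed simp

lemma remove_prim_append:
  "prim p p (a @ b) = t @ prim p p b \<Longrightarrow> length t = length a \<Longrightarrow>
    remove_prim p (a @ b) = filter (\<lambda>v. 0 < v) (map2 (-) a t) @ remove_prim p b"
  by (simp add: remove_prim_def zip_append)

lemma remove_prim_split_parts:
  assumes p: "2 \<le> p"
  shows "p_spaced p x \<Longrightarrow> remove_prim p (split_parts p x) = split_parts p (lower_parts p x)"
proof (induction x)
  case (Cons v xs)
  show ?case
  proof (cases "p \<le> v")
    case True
    have "v mod (p - 1) < p - 1"
      using p by simp
    then show ?thesis
      using Cons split_parts_Cons_ge[OF p Cons.prems True] length_block_rim[OF p]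
      by (simp add: remove_prim_append split_parts_lower_parts_Cons p_spaced_Cons)
  next
    case False
    then have "xs = []" and "0 < v"
      using Cons.prems p_spaced_Cons_less by (auto simp: p_spaced_Cons)
    then show ?thesis
      using False prim_replicate_one[of v p] by (simp add: split_parts_singleton_less remove_prim_def
          lower_parts_def zip_same map_replicate_const)
  qed
qed (simp add: remove_prim_def lower_parts_def)

lemma sum_list_split_parts: "2 \<le> p \<Longrightarrow> sum_list (split_parts p x) = sum_list x"
  by (induction x) (simp_all add: split_parts_Cons sum_list_filter_pos sum_list_split_part)

lemma msym_aux_split_parts:
  assumes p: "2 \<le> p"
  shows "p_spaced p x \<Longrightarrow>
    msym_aux p n x = map (\<lambda>(a, r). (a, a + (if p dvd a then 0 else 1) - r)) (msym_aux p n (split_parts p x))"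
proof (induction n arbitrary: x)
  case (Suc n)
  show ?case
  proof (cases "x = []")
    case False
    then have "0 < sum_list (split_parts p x)"
      using Suc.prems by (cases x) (auto simp: sum_list_split_parts[OF p] p_spaced_Cons)
    then have "split_parts p x \<noteq> []"
      by auto
    then show ?thesis
      using False Suc.IH[OF p_spaced_lower_parts[OF Suc.prems]] Suc.prems
        length_split_parts[OF p Suc.prems] sum_list_prim_split_parts[OF p Suc.prems]
      by (simp add: remove_prim_p_spaced remove_prim_split_parts[OF p])
  qed simp
qed simp

lemma sorted_nat_eq_filter_pos_append:
  "sorted_wrt (\<ge>) (xs :: nat list) \<Longrightarrow>
    xs = filter (\<lambda>y. 0 < y) xs @ replicate (length xs - length (filter (\<lambda>y. 0 < y) xs)) 0"
proof (induction xs)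
  case (Cons y ys)
  show ?case
  proof (cases "0 < y")
    case True
    then show ?thesis
      using Cons by (simp add: Suc_diff_le)
  next
    case False
    then have "\<forall>z\<in>set ys. z = 0"
      using Cons.prems by auto
    then show ?thesis
      using False by (simp add: replicate_length_same filter_empty_conv)
  qed
qed simp

lemma sorted_nat_eqI:
  assumes "sorted_wrt (\<ge>) (xs :: nat list)" "sorted_wrt (\<ge>) ys" "length xs = length ys"
    "filter (\<lambda>y. 0 < y) xs = filter (\<lambda>y. 0 < y) ys"
  shows "xs = ys"
  using sorted_nat_eq_filter_pos_append[OF assms(1)] sorted_nat_eq_filter_pos_append[OF assms(2)] assms(3,4)
  by metis

lemma list_all2_le_sum_list_eq:
  "list_all2 (\<le>) xs ys \<Longrightarrow> sum_list xs = sum_list (ys :: nat list) \<Longrightarrow> xs = ys"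
proof (induction rule: list_all2_induct)
  case (Cons x xs y ys)
  have "sum_list xs \<le> sum_list ys"
    using Cons.hyps(2) by (induction rule: list_all2_induct) auto
  then show ?case
    using Cons by simp
qed simp

lemma p_spaced_nth_less_imp_last:
  assumes "2 \<le> p" "p_spaced p x" "i < length x" "x ! i < p"
  shows "i = length x - 1"
proof (rule ccontr)
  assume "i \<noteq> length x - 1"
  then have "i + 1 < length x"
    using assms(3) by simp
  then have "x ! (i + 1) + (p - 1) \<le> x ! i" and "0 < x ! (i + 1)"
    using assms(2) sorted_wrt_nth_less[of _ x i "i + 1"] by (auto simp: p_spaced_def)
  then show False
    using assms(1,4) by linarith
qed

lemma last_prim_le_last_p_spaced:
  assumes p: "2 \<le> p" and sp: "p_spaced p x" and ne: "x \<noteq> []" and small: "last x < p"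
    and mu: "mu \<noteq> []" "\<forall>v\<in>set mu. 0 < v" and len: "length mu = length x"
    and rim: "sum_list (prim p p mu) = sum_list (prim p p x)"
  shows "last (prim p p mu) \<le> last x"
proof -
  obtain C d where seg: "sum_list (prim p p mu) + d = p * C + p" "C < length mu"
      "last (prim p p mu) + d \<le> p"
    using prim_segments[OF mu, of p p] p by auto
  have "0 < last x"
    using sp ne by (simp add: p_spaced_def)
  have eq: "p * (length x - 1) + last x + d = p * (C + 1)"
    using seg(1) rim sum_list_prim_p_spaced[OF sp ne] small by simp
  have "C + 1 = length x"
  proof (rule ccontr)
    assume "C + 1 \<noteq> length x"
    then have "p * (C + 1) \<le> p * (length x - 1)"
      using seg(2) len by (intro mult_le_mono2) simp
    then show False
      using eq \<open>0 < last x\<close> by linarith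
  qed
  then have "p * (length x - 1) = p * C"
    by (metis add_diff_cancel_right')
  moreover have "p * (C + 1) = p * C + p"
    by simp
  ultimately have "last x + d = p"
    using eq by linarith
  then show ?thesis
    using seg(3) by linarith
qed

lemma p_spaced_determined_by_rim:
  assumes p: "2 \<le> p" and sp: "p_spaced p x" and ne: "x \<noteq> []" and mu: "is_partition mu"
    and len: "length mu = length x" and rim: "sum_list (prim p p mu) = sum_list (prim p p x)"
    and rest: "remove_prim p mu = lower_parts p x"
  shows "mu = x"
proof -
  define t where "t = prim p p mu"
  have sorted: "sorted_wrt (\<ge>) mu" and pos: "\<forall>v\<in>set mu. 0 < v"
    using mu by (auto simp: is_partition_def)
  have diff: "map2 (-) mu t = map (\<lambda>v. v - p) x"
  proof (rule sorted_nat_eqI)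
    show "sorted_wrt (\<ge>) (map2 (-) mu t)"
      unfolding t_def using sorted_map2_minus_prim[OF sorted pos] p by simp
    have "sorted_wrt (\<lambda>a b. b - p \<le> a - p) x"
      using sp by (auto simp: p_spaced_def elim: sorted_wrt_mono_rel[rotated])
    then show "sorted_wrt (\<ge>) (map (\<lambda>v. v - p) x)"
      by (simp add: sorted_wrt_map)
    show "length (map2 (-) mu t) = length (map (\<lambda>v. v - p) x)"
      using len by (simp add: t_def)
    show "filter (\<lambda>y. 0 < y) (map2 (-) mu t) = filter (\<lambda>y. 0 < y) (map (\<lambda>v. v - p) x)"
      using rest unfolding remove_prim_def lower_parts_def t_def .
  qed
  have le: "list_all2 (\<le>) mu x"
  proof (rule list_all2_all_nthI)
    fix i assume i: "i < length mu"
    have "mu ! i - t ! i = x ! i - p"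
      using arg_cong[OF diff, of "\<lambda>l. l ! i"] i len by (simp add: t_def)
    moreover have "t ! i \<le> mu ! i" and "t ! i \<le> p"
      using list_all2_nthD[OF prim_le_parts[OF pos]] prim_le[OF _ pos, of p p] i
      by (auto simp: t_def)
    moreover have "mu ! i \<le> x ! i" if "x ! i < p" "mu ! i = t ! i"
    proof -
      have "i = length x - 1"
        using p_spaced_nth_less_imp_last[OF p sp] i len that(1) by simp
      moreover have "length t = length x"
        using len by (simp add: t_def)
      ultimately have "t ! i = last t" and "x ! i = last x"
        using ne by (metis last_conv_nth length_0_conv)+
      moreover have "mu \<noteq> []"
        using i by auto
      ultimately show ?thesis
        using last_prim_le_last_p_spaced[OF p sp ne _ _ pos len rim] that
        by (simp add: t_def)
    qed
    ultimately show "mu ! i \<le> x ! i"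
      by (cases "p \<le> x ! i") auto
  qed (rule len)
  have "sum_list (map2 (-) mu t) + sum_list t = sum_list mu"
    unfolding t_def by (rule sum_list_map2_minus[OF prim_le_parts[OF pos]])
  moreover have "sum_list (map (\<lambda>v. v - p) x) + sum_list (prim p p x) = sum_list x"
    using sum_list_map2_minus[OF prim_le_parts, of x p p] sp map2_minus_prim_p_spaced[OF sp]
    by (simp add: p_spaced_def)
  ultimately have "sum_list mu = sum_list x"
    using diff rim by (simp add: t_def)
  then show ?thesis
    using list_all2_le_sum_list_eq[OF le] by simp
qed

lemma msym_aux_determines_p_spaced:
  assumes p: "2 \<le> p"
  shows "p_spaced p x \<Longrightarrow> is_partition mu \<Longrightarrow> sum_list mu = sum_list x \<Longrightarrow> sum_list x \<le> n \<Longrightarrow>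
    msym_aux p n mu = msym_aux p n x \<Longrightarrow> mu = x"
proof (induction n arbitrary: x mu)
  case 0
  then show ?case
    by (cases x; cases mu) (auto simp: p_spaced_Cons is_partition_def)
next
  case (Suc n)
  show ?case
  proof (cases "x = []")
    case True
    then show ?thesis
      using Suc.prems by (cases mu) (auto simp: is_partition_def)
  next
    case False
    have pos: "\<forall>v\<in>set mu. 0 < v" and pos_x: "\<forall>v\<in>set x. 0 < v"
      using Suc.prems by (auto simp: is_partition_def p_spaced_def)
    then have "mu \<noteq> []"
      using Suc.prems(3) False by (cases x) auto
    then have rim: "sum_list (prim p p mu) = sum_list (prim p p x)" and len: "length mu = length x"
      and tail: "msym_aux p n (remove_prim p mu) = msym_aux p n (lower_parts p x)"
      using Suc.prems(5) False remove_prim_p_spaced[OF Suc.prems(1)] by simp_all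
    have "0 < sum_list (prim p p x)"
      using sum_list_prim_p_spaced[OF Suc.prems(1) False] pos_x False p by simp
    moreover have "sum_list (remove_prim p mu) + sum_list (prim p p mu) = sum_list mu"
      using sum_list_remove_prim[OF pos] .
    moreover have "sum_list (lower_parts p x) + sum_list (prim p p x) = sum_list x"
      using sum_list_remove_prim[OF pos_x, of p] remove_prim_p_spaced[OF Suc.prems(1)] by simp
    ultimately have "remove_prim p mu = lower_parts p x"
      using Suc.IH[OF p_spaced_lower_parts[OF Suc.prems(1)] is_partition_remove_prim _ _ tail]
        Suc.prems(2-4) rim p by simp
    then show ?thesis
      using p_spaced_determined_by_rim[OF p Suc.prems(1) False Suc.prems(2) len rim] by simp
  qed
qed

lemma p_spaced_imp_partition: "p_spaced p x \<Longrightarrow> is_partition x"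
  unfolding p_spaced_def is_partition_def by (auto elim: sorted_wrt_mono_rel[rotated])

lemma p_spaced_imp_p_regular:
  assumes "2 \<le> p" "p_spaced p x"
  shows "p_regular p x"
proof -
  have "sorted_wrt (>) x"
    using assms by (auto simp: p_spaced_def elim: sorted_wrt_mono_rel[rotated])
  then have "distinct x"
    by (induction x) auto
  have "count_list x v < p" for v
  proof -
    have "count_list x v \<le> 1"
      using \<open>distinct x\<close> by (induction x) auto
    then show ?thesis
      using assms(1) by linarith
  qed
  then show ?thesis
    by (simp add: p_regular_def)
qed

lemma p_spaced_scaled:
  assumes "2 \<le> p" "sorted_wrt (>) lam" "\<forall>x\<in>set lam. 0 < x"
  shows "p_spaced p (map (\<lambda>x. (p - 1) * x) lam)"
proof -
  have "sorted_wrt (\<lambda>a b. (p - 1) * b + (p - 1) \<le> (p - 1) * a) lam"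
  proof (rule sorted_wrt_mono_rel[OF _ assms(2)])
    fix a b :: nat
    assume "a > b"
    then have "(p - 1) * (b + 1) \<le> (p - 1) * a"
      by (intro mult_le_mono2) simp
    then show "(p - 1) * b + (p - 1) \<le> (p - 1) * a"
      by (simp add: distrib_left)
  qed
  then show ?thesis
    using assms(1,3) by (auto simp: p_spaced_def sorted_wrt_map)
qed

lemma concat_replicate_eq_split_parts:
  assumes "2 \<le> p" "\<forall>x\<in>set lam. 0 < x"
  shows "concat (map (\<lambda>x. replicate (p - 1) x) lam) = split_parts p (map (\<lambda>x. (p - 1) * x) lam)"
  using assms(2)
proof (induction lam)
  case (Cons a lam)
  have "split_part p ((p - 1) * a) = replicate (p - 1) a"
    using split_part_eq[of 0 p a] assms(1) by (simp add: balanced_block_def)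
  then show ?case
    using Cons by (simp add: split_parts_Cons)
qed simp

lemma mullineux_split_parts:
  assumes p: "2 \<le> p" and spaced: "p_spaced p x"
  shows "mullineux p (split_parts p x) = x"
proof -
  have sum: "sum_list (split_parts p x) = sum_list x"
    using sum_list_split_parts[OF p] .
  have symbol: "mullineux_symbol p x =
      map (\<lambda>(a, r). (a, a + (if p dvd a then 0 else 1) - r)) (mullineux_symbol p (split_parts p x))"
    unfolding mullineux_symbol_def sum using msym_aux_split_parts[OF p spaced] .
  show ?thesis
    unfolding mullineux_def
  proof (rule the_equality)
    show "is_partition x \<and> p_regular p x \<and> sum_list x = sum_list (split_parts p x) \<and>
      mullineux_symbol p x =
        map (\<lambda>(a, r). (a, a + (if p dvd a then 0 else 1) - r)) (mullineux_symbol p (split_parts p x))"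
      using p_spaced_imp_partition[OF spaced] p_spaced_imp_p_regular[OF p spaced] sum symbol by simp
  next
    fix mu
    assume "is_partition mu \<and> p_regular p mu \<and> sum_list mu = sum_list (split_parts p x) \<and>
      mullineux_symbol p mu =
        map (\<lambda>(a, r). (a, a + (if p dvd a then 0 else 1) - r)) (mullineux_symbol p (split_parts p x))"
    then have "is_partition mu" and "sum_list mu = sum_list x"
      and "mullineux_symbol p mu = mullineux_symbol p x"
      using sum symbol by simp_all
    then show "mu = x"
      using msym_aux_determines_p_spaced[OF p spaced, of mu "sum_list x"]
      by (simp add: mullineux_symbol_def)
  qed
qed

theorem proposition7p3:
  fixes p :: nat and lam :: "nat list"
  assumes "prime p"
    and "sorted_wrt (>) lam"
    and "\<forall>x\<in>set lam. 0 < x"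
  shows "mullineux p (concat (map (\<lambda>x. replicate (p - 1) x) lam)) = map (\<lambda>x. (p - 1) * x) lam"
proof -
  have p: "2 \<le> p"
    using assms(1) prime_ge_2_nat by blast
  then have "concat (map (\<lambda>x. replicate (p - 1) x) lam) = split_parts p (map (\<lambda>x. (p - 1) * x) lam)"
    using concat_replicate_eq_split_parts assms(3) by blast
  then show ?thesis
    using mullineux_split_parts[OF p p_spaced_scaled[OF p assms(2,3)]] by simp
qed

end
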